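(* Let $S=\langle T,\Pi,C\rangle$ be a state space and let $(A_i,\psi_i)$, $1\le i\le k$, be abstractions of $S$ forming an additive abstraction system. Let $t,g\in T$ and let $\pi$ be a path from $t$ to $g$ in $S$ with $C(\pi)=\sum_{i=1}^k C^*_i(t_i,g_i)$. Then $C_j(\pi_j)=C^*_j(t_j,g_j)$ for all $j\in\{1,\dots,k\}$.
   Context: A state space is a weighted directed graph $S=\langle T,\Pi,C\rangle$ where $T$ is a finite set of states, $\Pi\subseteq T\times T$ is a set of directed edges, and $C:\Pi\to\mathbb{N}=\{0,1,2,\dots\}$. A path from $u$ to $v$ is a sequence of edges $\langle\pi^1,\dots,\pi^n\rangle$ with $\pi^j=(u^{j-1},u^j)\in\Pi$, $u^0=u$, $u^n=v$; its cost is $C(\pi)=\sum_j C(\pi^j)$. An abstract state space is $A_i=\langle T_i,\Pi_i,C_i,R_i\rangle$ with $T_i$ a set of abstract states, $\Pi_i\subseteq T_i\times T_i$, and edge weights $C_i,R_i:\Pi_i\to\mathbb{N}$ (primary and residual cost), extended additively to paths. An abstraction of $S$ is a pair $(A_i,\psi_i)$ with $\psi_i:T\to T_i$ such that (1) for every $(u,v)\in\Pi$, $(\psi_i(u),\psi_i(v))\in\Pi_i$, and (2) for every $\pi=(u,v)\in\Pi$, $C_i(\pi_i)+R_i(\pi_i)\le C(\pi)$ where $\pi_i=(\psi_i(u),\psi_i(v))$. The system is additive if for every $\pi\in\Pi$, $\sum_{i=1}^k C_i(\pi_i)\le C(\pi)$. Write $t_i=\psi_i(t)$, and for a path $\pi=\langle\pi^1,\dots,\pi^n\rangle$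 in $S$ let $\pi_i=\langle\pi^1_i,\dots,\pi^n_i\rangle$ be its edgewise image, a path in $A_i$. Define $C^*_i(x,y)=\min\{C_i(\rho):\rho\text{ a path from }x\text{ to }y\text{ in }A_i\}$. *)

theory Defs
  imports Main
begin

text \<open>A state space: finite set of states T, edges Pi \<subseteq> T \<times> T; costs are a separate function.\<close>
definition state_space :: "'a set \<Rightarrow> ('a \<times> 'a) set \<Rightarrow> bool" where
  "state_space T Pi \<longleftrightarrow> finite T \<and> Pi \<subseteq> T \<times> T"

fun is_path :: "('a \<times> 'a) set \<Rightarrow> 'a \<Rightarrow> 'a \<Rightarrow> ('a \<times> 'a) list \<Rightarrow> bool" where
  "is_path E u v [] = (u = v)"
| "is_path E u v (e # es) = (e \<in> E \<and> fst e = u \<and> is_path E (snd e) v es)"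

definition path_cost :: "(('a \<times> 'a) \<Rightarrow> nat) \<Rightarrow> ('a \<times> 'a) list \<Rightarrow> nat" where
  "path_cost c p = sum_list (map c p)"

definition abs_edge :: "('a \<Rightarrow> 'b) \<Rightarrow> ('a \<times> 'a) \<Rightarrow> ('b \<times> 'b)" where
  "abs_edge psi e = (psi (fst e), psi (snd e))"

definition abs_path :: "('a \<Rightarrow> 'b) \<Rightarrow> ('a \<times> 'a) list \<Rightarrow> ('b \<times> 'b) list" where
  "abs_path psi p = map (abs_edge psi) p"

definition opt_cost :: "('b \<times> 'b) set \<Rightarrow> (('b \<times> 'b) \<Rightarrow> nat) \<Rightarrow> 'b \<Rightarrow> 'b \<Rightarrow> nat" where
  "opt_cost E c x y = Inf {path_cost c \<rho> | \<rho>. is_path E x y \<rho>}"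

definition abstraction ::
  "'a set \<Rightarrow> ('a \<times> 'a) set \<Rightarrow> (('a \<times> 'a) \<Rightarrow> nat)
   \<Rightarrow> 'b set \<Rightarrow> ('b \<times> 'b) set \<Rightarrow> (('b \<times> 'b) \<Rightarrow> nat) \<Rightarrow> (('b \<times> 'b) \<Rightarrow> nat)
   \<Rightarrow> ('a \<Rightarrow> 'b) \<Rightarrow> bool" where
  "abstraction T Pi C Ti Pii Ci Ri psi \<longleftrightarrow>
     Pii \<subseteq> Ti \<times> Ti \<and>
     (\<forall>t\<in>T. psi t \<in> Ti) \<and>
     (\<forall>e\<in>Pi. abs_edge psi e \<in> Pii) \<and>
     (\<forall>e\<in>Pi. Ci (abs_edge psi e) + Ri (abs_edge psi e) \<le> C e)"

definition additive ::
  "nat \<Rightarrow> ('a \<times> 'a) set \<Rightarrow> (('a \<times> 'a) \<Rightarrow> nat) \<Rightarrow> (nat \<Rightarrow> ('b \<times> 'b) \<Rightarrow> nat)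
   \<Rightarrow> (nat \<Rightarrow> 'a \<Rightarrow> 'b) \<Rightarrow> bool" where
  "additive k Pi C Cs psis \<longleftrightarrow>
     (\<forall>e\<in>Pi. (\<Sum>i=1..k. Cs i (abs_edge (psis i) e)) \<le> C e)"

end

theory Submission
  imports Defs
begin

text \<open>Each abstract image of \<pi> is a path between the abstract endpoints, so its
primary cost is at least the abstract optimum; by additivity the primary costs of
the images sum to at most C(\<pi>), which by hypothesis equals the sum of the optima.
A sum of termwise inequalities that is an equality forces every term to be tight.\<close>

lemma is_path_edges_subset: "is_path E u v p \<Longrightarrow> set p \<subseteq> E"
  by (induction p arbitrary: u) auto

lemma is_path_abs_path:
  assumes "is_path E u v p" and "\<forall>e\<in>E. abs_edge psi e \<in> E'"
  shows "is_path E' (psi u) (psi v) (abs_path psi p)"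
  using assms by (induction p arbitrary: u) (auto simp: abs_path_def abs_edge_def)

lemma opt_cost_le_path_cost: "is_path E x y \<rho> \<Longrightarrow> opt_cost E c x y \<le> path_cost c \<rho>"
  unfolding opt_cost_def by (rule cInf_lower) auto

lemma sum_path_cost_abs_path_le:
  assumes "set p \<subseteq> Pi" and "\<forall>e\<in>Pi. (\<Sum>i\<in>I. Cs i (abs_edge (psis i) e)) \<le> C e"
  shows "(\<Sum>i\<in>I. path_cost (Cs i) (abs_path (psis i) p)) \<le> path_cost C p"
  using assms(1)
proof (induction p)
  case Nil
  then show ?case by (simp add: path_cost_def abs_path_def)
next
  case (Cons e p)
  have "(\<Sum>i\<in>I. path_cost (Cs i) (abs_path (psis i) (e # p)))
      = (\<Sum>i\<in>I. Cs i (abs_edge (psis i) e)) + (\<Sum>i\<in>I. path_cost (Cs i) (abs_path (psis i) p))"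
    by (simp add: path_cost_def abs_path_def sum.distrib)
  also have "\<dots> \<le> C e + path_cost C p"
    using Cons assms(2) by (intro add_mono) auto
  finally show ?case by (simp add: path_cost_def)
qed

lemma sum_le_sum_imp_eq:
  fixes f g :: "'i \<Rightarrow> 'c::ordered_cancel_comm_monoid_add"
  assumes "finite I" and "\<And>i. i \<in> I \<Longrightarrow> f i \<le> g i"
    and "(\<Sum>i\<in>I. g i) \<le> (\<Sum>i\<in>I. f i)" and "j \<in> I"
  shows "f j = g j"
proof (rule ccontr)
  assume "f j \<noteq> g j"
  with assms(2,4) have "f j < g j" by (simp add: order_less_le)
  with assms have "(\<Sum>i\<in>I. f i) < (\<Sum>i\<in>I. g i)"
    by (intro sum_strict_mono_ex1) auto
  with assms(3) show False by simp
qed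

theorem lemma7:
  fixes T :: "'a set" and Pi :: "('a \<times> 'a) set" and C :: "('a \<times> 'a) \<Rightarrow> nat"
    and k :: nat
    and Ts :: "nat \<Rightarrow> 'b set" and Pis :: "nat \<Rightarrow> ('b \<times> 'b) set"
    and Cs Rs :: "nat \<Rightarrow> ('b \<times> 'b) \<Rightarrow> nat"
    and psis :: "nat \<Rightarrow> 'a \<Rightarrow> 'b"
    and t g :: 'a and \<pi> :: "('a \<times> 'a) list" and j :: nat
  assumes "state_space T Pi"
    and "\<forall>i\<in>{1..k}. abstraction T Pi C (Ts i) (Pis i) (Cs i) (Rs i) (psis i)"
    and "additive k Pi C Cs psis"
    and "t \<in> T" and "g \<in> T"
    and "is_path Pi t g \<pi>"
    and "path_cost C \<pi> = (\<Sum>i=1..k. opt_cost (Pis i) (Cs i) (psis i t) (psis i g))"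
    and "j \<in> {1..k}"
  shows "path_cost (Cs j) (abs_path (psis j) \<pi>) = opt_cost (Pis j) (Cs j) (psis j t) (psis j g)"
proof -
  let ?opt = "\<lambda>i. opt_cost (Pis i) (Cs i) (psis i t) (psis i g)"
  let ?img = "\<lambda>i. path_cost (Cs i) (abs_path (psis i) \<pi>)"
  have opt_le_img: "?opt i \<le> ?img i" if "i \<in> {1..k}" for i
  proof -
    from assms(2) that have "\<forall>e\<in>Pi. abs_edge (psis i) e \<in> Pis i"
      by (auto simp: abstraction_def)
    then show ?thesis
      by (rule opt_cost_le_path_cost[OF is_path_abs_path[OF assms(6)]])
  qed
  have "(\<Sum>i=1..k. ?img i) \<le> path_cost C \<pi>"
    using assms(3) unfolding additive_def
    by (rule sum_path_cost_abs_path_le[OF is_path_edges_subset[OF assms(6)]])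
  then have "(\<Sum>i=1..k. ?img i) \<le> (\<Sum>i=1..k. ?opt i)"
    using assms(7) by simp
  from sum_le_sum_imp_eq[of "{1..k}" ?opt ?img, OF _ opt_le_img this assms(8)]
  show ?thesis by simp
qed

end
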